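(* Let $X$ be a topological space. The following are equivalent: (a) $X$ is totally Lindelöf; (b) every $\omega$-closed filter base $\mathcal{F}$ on $X$ is contained in some total $\omega$-closed filter base $\mathcal{H}$ on $X$; (c) every $\delta$-stable filter base $\mathcal{F}$ on $X$ is contained in some total $\delta$-stable filter base $\mathcal{H}$ on $X$.
   Context: A filter base on $X$ is a nonempty $\mathcal{F}\subseteq\mathcal{P}(X)$ with $\emptyset\notin\mathcal{F}$ and closed under pairwise intersections. $\mathcal{F}$ is stable under countable intersections if for every countable $S\subseteq\mathcal{F}$ there is $H\in\mathcal{F}$ with $H\subseteq\bigcap S$; $\omega$-closed if $\bigcap S\in\mathcal{F}$ for every nonempty countable $S\subseteq\mathcal{F}$; $\delta$-stable if $\bigcap S\neq\emptyset$ for every countable $S\subseteq\mathcal{F}$. $ad(\mathcal{F})=\bigcap\{\overline{F}:F\in\mathcal{F}\}$. A filter base $\mathcal{F}$ is total if every filter base $\mathcal{H}\supseteq\mathcal{F}$ satisfies $ad(\mathcal{H})\neq\emptyset$. $X$ is totally Lindelöf if every filter base on $X$ stable under countable intersections is contained in a total filter base on $X$ stable under countable intersections. *)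

theory Defs
  imports "HOL-Analysis.Analysis"
begin

definition filter_base :: "'a topology \<Rightarrow> 'a set set \<Rightarrow> bool" where
  "filter_base X \<F> \<longleftrightarrow> \<F> \<noteq> {} \<and> \<F> \<subseteq> Pow (topspace X) \<and> {} \<notin> \<F> \<and>
     (\<forall>A\<in>\<F>. \<forall>B\<in>\<F>. A \<inter> B \<in> \<F>)"

text \<open>Intersections of families of subsets are taken inside the space
  (so the empty intersection is the whole space).\<close>

definition stable_countable_inter :: "'a topology \<Rightarrow> 'a set set \<Rightarrow> bool" where
  "stable_countable_inter X \<F> \<longleftrightarrow>
     (\<forall>S. countable S \<and> S \<subseteq> \<F> \<longrightarrow> (\<exists>H\<in>\<F>. H \<subseteq> topspace X \<inter> \<Inter>S))"

definition omega_closed :: "'a set set \<Rightarrow> bool" where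
  "omega_closed \<F> \<longleftrightarrow> (\<forall>S. countable S \<and> S \<noteq> {} \<and> S \<subseteq> \<F> \<longrightarrow> \<Inter>S \<in> \<F>)"

definition delta_stable :: "'a topology \<Rightarrow> 'a set set \<Rightarrow> bool" where
  "delta_stable X \<F> \<longleftrightarrow>
     (\<forall>S. countable S \<and> S \<subseteq> \<F> \<longrightarrow> topspace X \<inter> \<Inter>S \<noteq> {})"

definition adherence :: "'a topology \<Rightarrow> 'a set set \<Rightarrow> 'a set" where
  "adherence X \<F> = topspace X \<inter> \<Inter>{X closure_of F | F. F \<in> \<F>}"

definition total_fb :: "'a topology \<Rightarrow> 'a set set \<Rightarrow> bool" where
  "total_fb X \<F> \<longleftrightarrow> filter_base X \<F> \<and>
     (\<forall>\<H>. filter_base X \<H> \<and> \<F> \<subseteq> \<H> \<longrightarrow> adherence X \<H> \<noteq> {})"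

definition totally_lindelof :: "'a topology \<Rightarrow> bool" where
  "totally_lindelof X \<longleftrightarrow>
     (\<forall>\<F>. filter_base X \<F> \<and> stable_countable_inter X \<F> \<longrightarrow>
        (\<exists>\<H>. \<F> \<subseteq> \<H> \<and> filter_base X \<H> \<and> total_fb X \<H> \<and> stable_countable_inter X \<H>))"

end

theory Submission
  imports Defs
begin

text \<open>All three conditions sit between \<omega>-closedness and \<delta>-stability:
  \<omega>-closed \<Longrightarrow> stable under countable intersections \<Longrightarrow> \<delta>-stable.
  Conversely, closing a \<delta>-stable filter base under countable intersections yields an
  \<omega>-closed filter base containing it, and totality passes to larger filter bases.
  So a filter base of the weaker kind can be enlarged to one of the stronger kind,
  extended to a total one, and read back as one of the weaker kind.\<close>

definition extends_to_total :: "'a topology \<Rightarrow> ('a set set \<Rightarrow> bool) \<Rightarrow> bool" where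
  "extends_to_total X P \<longleftrightarrow>
     (\<forall>\<F>. filter_base X \<F> \<and> P \<F> \<longrightarrow> (\<exists>\<H>. \<F> \<subseteq> \<H> \<and> filter_base X \<H> \<and> total_fb X \<H> \<and> P \<H>))"

lemma totally_lindelof_iff_extends_to_total:
  "totally_lindelof X \<longleftrightarrow> extends_to_total X (stable_countable_inter X)"
  unfolding totally_lindelof_def extends_to_total_def ..

lemma total_fb_mono:
  assumes "total_fb X \<H>" "\<H> \<subseteq> \<G>" "filter_base X \<G>"
  shows "total_fb X \<G>"
  using assms unfolding total_fb_def by blast

lemma extends_to_total_iff:
  assumes weaker: "\<And>\<F>. filter_base X \<F> \<Longrightarrow> P \<F> \<Longrightarrow> Q \<F>"
    and closure: "\<And>\<F>. filter_base X \<F> \<Longrightarrow> Q \<F> \<Longrightarrow> \<F> \<subseteq> c \<F> \<and> filter_base X (c \<F>) \<and> P (c \<F>)"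
  shows "extends_to_total X P \<longleftrightarrow> extends_to_total X Q"
proof
  assume ext: "extends_to_total X P"
  show "extends_to_total X Q"
    unfolding extends_to_total_def
  proof (intro allI impI)
    fix \<F> assume "filter_base X \<F> \<and> Q \<F>"
    with closure ext obtain \<H> where "c \<F> \<subseteq> \<H>" "filter_base X \<H>" "total_fb X \<H>" "P \<H>"
      unfolding extends_to_total_def by meson
    with closure weaker \<open>filter_base X \<F> \<and> Q \<F>\<close>
    show "\<exists>\<H>. \<F> \<subseteq> \<H> \<and> filter_base X \<H> \<and> total_fb X \<H> \<and> Q \<H>"
      by blast
  qed
next
  assume ext: "extends_to_total X Q"
  show "extends_to_total X P"
    unfolding extends_to_total_def
  proof (intro allI impI)
    fix \<F> assume "filter_base X \<F> \<and> P \<F>"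
    with weaker ext obtain \<H> where \<H>: "\<F> \<subseteq> \<H>" "filter_base X \<H>" "total_fb X \<H>" "Q \<H>"
      unfolding extends_to_total_def by meson
    with closure have "\<H> \<subseteq> c \<H>" "filter_base X (c \<H>)" "P (c \<H>)"
      by blast+
    with \<H> total_fb_mono show "\<exists>\<H>. \<F> \<subseteq> \<H> \<and> filter_base X \<H> \<and> total_fb X \<H> \<and> P \<H>"
      by blast
  qed
qed

definition countable_inter_closure :: "'a set set \<Rightarrow> 'a set set" where
  "countable_inter_closure \<F> = {\<Inter>S | S. countable S \<and> S \<noteq> {} \<and> S \<subseteq> \<F>}"

lemma countable_inter_closureI:
  "countable S \<Longrightarrow> S \<noteq> {} \<Longrightarrow> S \<subseteq> \<F> \<Longrightarrow> \<Inter>S \<in> countable_inter_closure \<F>"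
  unfolding countable_inter_closure_def by blast

lemma subset_countable_inter_closure: "\<F> \<subseteq> countable_inter_closure \<F>"
  using countable_inter_closureI[of "{_}"] by auto

lemma omega_closed_countable_inter_closure: "omega_closed (countable_inter_closure \<F>)"
  unfolding omega_closed_def
proof (intro allI impI)
  fix S assume S: "countable S \<and> S \<noteq> {} \<and> S \<subseteq> countable_inter_closure \<F>"
  then have decompose: "\<forall>A\<in>S. \<exists>T. countable T \<and> T \<noteq> {} \<and> T \<subseteq> \<F> \<and> \<Inter>T = A"
    unfolding countable_inter_closure_def by blast
  obtain f where f: "\<forall>A\<in>S. countable (f A) \<and> f A \<noteq> {} \<and> f A \<subseteq> \<F> \<and> \<Inter>(f A) = A"
    using bchoice[OF decompose] by blast
  let ?T = "\<Union>(f ` S)"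
  have "\<Inter>?T = (\<Inter>A\<in>S. \<Inter>(f A))"
    by blast
  also have "\<dots> = \<Inter>S"
    using f by simp
  finally have "\<Inter>?T = \<Inter>S" .
  moreover have "\<Inter>?T \<in> countable_inter_closure \<F>"
  proof (rule countable_inter_closureI)
    show "countable ?T"
      using S f by (intro countable_UN) auto
    show "?T \<noteq> {}" "?T \<subseteq> \<F>"
      using S f by auto
  qed
  ultimately show "\<Inter>S \<in> countable_inter_closure \<F>"
    by simp
qed

lemma countable_inter_closure_subset_Pow:
  assumes "\<F> \<subseteq> Pow U"
  shows "countable_inter_closure \<F> \<subseteq> Pow U"
proof
  fix A assume "A \<in> countable_inter_closure \<F>"
  then obtain S where "S \<noteq> {}" "S \<subseteq> \<F>" "A = \<Inter>S"
    unfolding countable_inter_closure_def by blast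
  with assms show "A \<in> Pow U"
    by blast
qed

lemma filter_base_countable_inter_closure:
  assumes "filter_base X \<F>" "delta_stable X \<F>"
  shows "filter_base X (countable_inter_closure \<F>)"
  unfolding filter_base_def
proof (intro conjI ballI)
  show "countable_inter_closure \<F> \<noteq> {}"
    using assms(1) subset_countable_inter_closure[of \<F>] unfolding filter_base_def
    by (metis subset_empty)
  show "countable_inter_closure \<F> \<subseteq> Pow (topspace X)"
    using assms(1) countable_inter_closure_subset_Pow unfolding filter_base_def by blast
  show "{} \<notin> countable_inter_closure \<F>"
  proof
    assume "{} \<in> countable_inter_closure \<F>"
    then obtain S where "countable S" "S \<subseteq> \<F>" "\<Inter>S = {}"
      unfolding countable_inter_closure_def by blast
    moreover from assms(2) \<open>countable S\<close> \<open>S \<subseteq> \<F>\<close> have "topspace X \<inter> \<Inter>S \<noteq> {}"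
      unfolding delta_stable_def by blast
    ultimately show False
      by simp
  qed
next
  fix A B assume "A \<in> countable_inter_closure \<F>" "B \<in> countable_inter_closure \<F>"
  then show "A \<inter> B \<in> countable_inter_closure \<F>"
    using omega_closed_countable_inter_closure[unfolded omega_closed_def, rule_format, of "{A, B}"]
    by simp
qed

lemma omega_closed_imp_stable_countable_inter:
  assumes "filter_base X \<F>" "omega_closed \<F>"
  shows "stable_countable_inter X \<F>"
  unfolding stable_countable_inter_def
proof (intro allI impI)
  fix S assume S: "countable S \<and> S \<subseteq> \<F>"
  from assms(1) have "\<F> \<noteq> {}" "\<F> \<subseteq> Pow (topspace X)"
    unfolding filter_base_def by blast+
  then obtain A where "A \<in> \<F>" "A \<subseteq> topspace X"
    by blast
  show "\<exists>H\<in>\<F>. H \<subseteq> topspace X \<inter> \<Inter>S"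
  proof (cases "S = {}")
    case True
    with \<open>A \<in> \<F>\<close> \<open>A \<subseteq> topspace X\<close> show ?thesis
      by auto
  next
    case False
    with S assms(2) have "\<Inter>S \<in> \<F>"
      unfolding omega_closed_def by blast
    with \<open>\<F> \<subseteq> Pow (topspace X)\<close> show ?thesis
      by blast
  qed
qed

lemma stable_countable_inter_imp_delta_stable:
  assumes "filter_base X \<F>" "stable_countable_inter X \<F>"
  shows "delta_stable X \<F>"
  unfolding delta_stable_def
proof (intro allI impI)
  fix S assume "countable S \<and> S \<subseteq> \<F>"
  with assms(2) obtain H where "H \<in> \<F>" "H \<subseteq> topspace X \<inter> \<Inter>S"
    unfolding stable_countable_inter_def by blast
  moreover have "H \<noteq> {}"
    using \<open>H \<in> \<F>\<close> assms(1) unfolding filter_base_def by blast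
  ultimately show "topspace X \<inter> \<Inter>S \<noteq> {}"
    by blast
qed

theorem proposition1p2:
  fixes X :: "'a topology"
  shows "(totally_lindelof X \<longleftrightarrow>
           (\<forall>\<F>. filter_base X \<F> \<and> omega_closed \<F> \<longrightarrow>
              (\<exists>\<H>. \<F> \<subseteq> \<H> \<and> filter_base X \<H> \<and> total_fb X \<H> \<and> omega_closed \<H>))) \<and>
         (totally_lindelof X \<longleftrightarrow>
           (\<forall>\<F>. filter_base X \<F> \<and> delta_stable X \<F> \<longrightarrow>
              (\<exists>\<H>. \<F> \<subseteq> \<H> \<and> filter_base X \<H> \<and> total_fb X \<H> \<and> delta_stable X \<H>)))"
proof -
  have omega_stable: "extends_to_total X omega_closed \<longleftrightarrow> extends_to_total X (stable_countable_inter X)"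
    by (rule extends_to_total_iff[where c = countable_inter_closure])
      (simp_all add: omega_closed_imp_stable_countable_inter subset_countable_inter_closure
        filter_base_countable_inter_closure omega_closed_countable_inter_closure
        stable_countable_inter_imp_delta_stable)
  have stable_delta: "extends_to_total X (stable_countable_inter X) \<longleftrightarrow> extends_to_total X (delta_stable X)"
    by (rule extends_to_total_iff[where c = countable_inter_closure])
      (simp_all add: stable_countable_inter_imp_delta_stable subset_countable_inter_closure
        filter_base_countable_inter_closure omega_closed_countable_inter_closure
        omega_closed_imp_stable_countable_inter)
  from omega_stable stable_delta show ?thesis
    unfolding totally_lindelof_iff_extends_to_total extends_to_total_def by simp
qed

end
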